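(* Consider the topological map $\bar G$ of a narrow-passage warehouse with shelves $s\in\{1,\dots,S\}$ arranged in a rectangular array. For each shelf $s$ choose one of its two 0-instance orientations $I_s$ (clockwise or counterclockwise directed cycle), and choose an arbitrary linear order $s_1,s_2,\dots,s_S$ of the shelves. Build a directed graph by processing the shelves in this order: start with the vertices and directed edges of $I_{s_1}$, and when processing $I_{s_k}$ add its vertices and add each of its directed edges whose underlying undirected edge has not already been oriented by an earlier processed cycle (edges already oriented keep their earlier orientation). Then in the resulting directed graph, for any two vertices $v_s,v_t\in\bar V$ there exists a directed path from $v_s$ to $v_t$ (i.e. the graph is strongly connected).
   Context: Warehouse: a grid with horizontal passage rows $\mathcal H=\{i_1<i_2<\dots\}$ and vertical passage columns $\mathcal V=\{j_1<j_2<\dots\}$ (each of width one cell), with rectangular shelf blocks filling the regions between consecutive passage rows and consecutive passage columns; there are $S=(|\mathcal H|-1)(|\mathcal V|-1)$ shelves. Topological map $\bar G=(\bar V,\bar E)$: its vertices are the crossing vertices (cells $(i,j)\in\mathcal H\times\mathcal V$) and one passage vertex for each passage segment between two consecutive crossings along a passage row or column; each passage vertex is adjacent exactly to the two crossing vertices at the ends of its segment, and there are no other edges. Each shelf $s$ is surrounded by four crossing vertices $v_i,v_j,v_m,v_n$ (its corners, in cyclic order) and four passage vertices $v'_i,v'_j,v'_m,v'_n$ (its sides, $v'_i$ between $v_i$ and $v_j$, etc.). The clockwise 0-instance of $s$ is the directed cycle $v_i\to v'_i\to v_j\to v'_j\to v_m\to v'_m\to v_n\to v'_n\to v_i$, and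 the counterclockwise 0-instance is the reverse cycle $v_i\to v'_n\to v_n\to v'_m\to v_m\to v'_j\to v_j\to v'_i\to v_i$. *)

theory Defs
  imports Main
begin

text \<open>Passage rows/columns are indexed by their rank
  0..nh-1 (rows) and 0..nv-1 (columns).
  Cross i j : crossing of the i-th passage row and j-th passage column.
  HSeg i j  : passage vertex on row i between crossings (i,j) and (i,j+1).
  VSeg i j  : passage vertex on column j between crossings (i,j) and (i+1,j).\<close>
datatype tvertex = Cross nat nat | HSeg nat nat | VSeg nat nat

definition tmap_vertices :: "nat \<Rightarrow> nat \<Rightarrow> tvertex set" where
  "tmap_vertices nh nv =
     {Cross i j | i j. i < nh \<and> j < nv} \<union>
     {HSeg i j | i j. i < nh \<and> j + 1 < nv} \<union>
     {VSeg i j | i j. i + 1 < nh \<and> j < nv}"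

text \<open>Shelves: shelf (a,b) lies between rows a,a+1 and columns b,b+1.\<close>
definition shelves :: "nat \<Rightarrow> nat \<Rightarrow> (nat \<times> nat) set" where
  "shelves nh nv = {(a, b). a + 1 < nh \<and> b + 1 < nv}"

text \<open>One orientation (0-instance) of shelf (a,b) as list of directed edges, going
  around corners (a,b) -> (a,b+1) -> (a+1,b+1) -> (a+1,b) -> (a,b) via the side passage
  vertices.\<close>
definition cycle_fwd :: "nat \<times> nat \<Rightarrow> (tvertex \<times> tvertex) list" where
  "cycle_fwd s = (case s of (a, b) \<Rightarrow>
     [(Cross a b, HSeg a b), (HSeg a b, Cross a (b+1)),
      (Cross a (b+1), VSeg a (b+1)), (VSeg a (b+1), Cross (a+1) (b+1)),
      (Cross (a+1) (b+1), HSeg (a+1) b), (HSeg (a+1) b, Cross (a+1) b),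
      (Cross (a+1) b, VSeg a b), (VSeg a b, Cross a b)])"

definition cycle_bwd :: "nat \<times> nat \<Rightarrow> (tvertex \<times> tvertex) list" where
  "cycle_bwd s = map (\<lambda>(u, v). (v, u)) (rev (cycle_fwd s))"

definition zero_instance :: "(nat \<times> nat \<Rightarrow> bool) \<Rightarrow> nat \<times> nat \<Rightarrow> (tvertex \<times> tvertex) list" where
  "zero_instance ori s = (if ori s then cycle_fwd s else cycle_bwd s)"

fun process :: "(nat \<times> nat \<Rightarrow> bool) \<Rightarrow> (tvertex \<times> tvertex) set \<Rightarrow> (nat \<times> nat) list
                 \<Rightarrow> (tvertex \<times> tvertex) set" where
  "process ori D [] = D"
| "process ori D (s # ss) =
     process ori (D \<union> {(u, v). (u, v) \<in> set (zero_instance ori s) \<and> (u, v) \<notin> D \<and> (v, u) \<notin> D}) ss"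

end

theory Submission
  imports Defs
begin

text \<open>Processing keeps the invariant that the reflexive-transitive closure of the digraph is
  symmetric. Each edge of the next cycle is either added or already present in one of its
  orientations, so by the invariant the whole cycle becomes a closed walk, along which every newly
  added edge can be traversed backwards. Hence at the end all vertices around any one shelf are
  mutually reachable. Since every passage vertex lies on some shelf (here two passage rows and two
  passage columns are needed), neighbouring shelves chain all vertices together. Neither the
  orientations nor the distinctness of the processing order matter.\<close>

lemma sym_rtrancl_if_reversible:
  assumes "\<forall>(u, v) \<in> R. (v, u) \<in> R\<^sup>*"
  shows "sym (R\<^sup>*)"
proof (rule symI)
  fix x y assume "(x, y) \<in> R\<^sup>*"
  then show "(y, x) \<in> R\<^sup>*"
  proof (induction rule: rtrancl_induct)
    case base
    then show ?case by simp
  next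
    case (step y z)
    then show ?case using assms by (blast intro: rtrancl_trans)
  qed
qed

lemma walk_rtrancl_hd_last:
  assumes "set (zip xs (tl xs)) \<subseteq> R\<^sup>*" and "x \<in> set xs"
  shows "(hd xs, x) \<in> R\<^sup>* \<and> (x, last xs) \<in> R\<^sup>*"
  using assms
proof (induction xs arbitrary: x rule: induct_list012)
  case (3 y z zs)
  then have yz: "(y, z) \<in> R\<^sup>*" and walk: "set (zip (z # zs) (tl (z # zs))) \<subseteq> R\<^sup>*" by auto
  have "(z, v) \<in> R\<^sup>* \<and> (v, last (z # zs)) \<in> R\<^sup>*" if "v \<in> set (z # zs)" for v
    using "3.IH"(2)[OF walk that] by simp
  then show ?case using yz "3.prems"(2) by (auto intro: rtrancl_trans)
qed auto

lemma closed_walk_rtrancl: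
  assumes "set (zip xs (tl xs)) \<subseteq> R\<^sup>*" and "hd xs = last xs"
    and "u \<in> set xs" and "v \<in> set xs"
  shows "(u, v) \<in> R\<^sup>*"
  using walk_rtrancl_hd_last[OF assms(1)] assms(2-4) by (metis rtrancl_trans)

definition shelf_walk :: "nat \<times> nat \<Rightarrow> tvertex list" where
  "shelf_walk s = (case s of (a, b) \<Rightarrow>
     [Cross a b, HSeg a b, Cross a (b+1), VSeg a (b+1), Cross (a+1) (b+1),
      HSeg (a+1) b, Cross (a+1) b, VSeg a b, Cross a b])"

lemma cycle_fwd_eq_shelf_walk: "cycle_fwd s = zip (shelf_walk s) (tl (shelf_walk s))"
  by (cases s) (simp add: shelf_walk_def cycle_fwd_def)

lemma cycle_bwd_eq_rev_shelf_walk: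
  "cycle_bwd s = zip (rev (shelf_walk s)) (tl (rev (shelf_walk s)))"
  by (cases s) (simp add: shelf_walk_def cycle_bwd_def cycle_fwd_def)

lemma hd_shelf_walk_eq_last: "hd (shelf_walk s) = last (shelf_walk s)"
  by (cases s) (simp add: shelf_walk_def)

lemma zero_instance_closed_walk:
  obtains w where "zero_instance ori s = zip w (tl w)" and "hd w = last w"
    and "set w = set (shelf_walk s)"
proof (cases "ori s")
  case True
  then show ?thesis
    using that[of "shelf_walk s"]
    by (simp add: zero_instance_def cycle_fwd_eq_shelf_walk hd_shelf_walk_eq_last)
next
  case False
  moreover have "shelf_walk s \<noteq> []" by (cases s) (simp add: shelf_walk_def)
  ultimately show ?thesis
    using that[of "rev (shelf_walk s)"]
    by (simp add: zero_instance_def cycle_bwd_eq_rev_shelf_walk hd_rev last_rev hd_shelf_walk_eq_last)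
qed

lemma zero_instance_edge_on_shelf_walk:
  assumes "(u, v) \<in> set (zero_instance ori s)"
  shows "u \<in> set (shelf_walk s)" and "v \<in> set (shelf_walk s)"
proof -
  obtain w where "zero_instance ori s = zip w (tl w)" and "set w = set (shelf_walk s)"
    by (rule zero_instance_closed_walk)
  moreover have "set (tl w) \<subseteq> set w" by (cases w) auto
  ultimately show "u \<in> set (shelf_walk s)" and "v \<in> set (shelf_walk s)"
    using assms set_zip_leftD[of u v w] set_zip_rightD[of u v w "tl w"] by auto
qed

lemma zero_instance_strongly_connected:
  assumes "set (zero_instance ori s) \<subseteq> R\<^sup>*"
    and "u \<in> set (shelf_walk s)" and "v \<in> set (shelf_walk s)"
  shows "(u, v) \<in> R\<^sup>*"
proof -
  obtain w where "zero_instance ori s = zip w (tl w)" and "hd w = last w"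
    and "set w = set (shelf_walk s)"
    by (rule zero_instance_closed_walk)
  with assms show ?thesis using closed_walk_rtrancl[of w R u v] by simp
qed

lemma process_mono: "D \<subseteq> process ori D ss"
proof (induction ss arbitrary: D)
  case (Cons s ss)
  show ?case unfolding process.simps by (rule subset_trans[OF Un_upper1 Cons.IH])
qed simp

lemma process_covers_zero_instance:
  assumes "s \<in> set ss"
  shows "set (zero_instance ori s) \<subseteq> process ori D ss \<union> (process ori D ss)\<inverse>"
  using assms
proof (induction ss arbitrary: D)
  case (Cons t ss)
  define E where "E = D \<union> {(u, v). (u, v) \<in> set (zero_instance ori t) \<and> (u, v) \<notin> D \<and> (v, u) \<notin> D}"
  have "process ori D (t # ss) = process ori E ss" by (simp add: E_def)
  moreover have "set (zero_instance ori t) \<subseteq> E \<union> E\<inverse>" by (auto simp: E_def)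
  moreover note process_mono[of E ori ss]
  ultimately show ?case using Cons by (cases "s = t") auto
qed simp

lemma process_sym_rtrancl:
  assumes "sym (D\<^sup>*)"
  shows "sym ((process ori D ss)\<^sup>*)"
  using assms
proof (induction ss arbitrary: D)
  case Nil
  then show ?case by simp
next
  case (Cons s ss)
  let ?C = "set (zero_instance ori s)"
  define E where "E = D \<union> {(u, v). (u, v) \<in> ?C \<and> (u, v) \<notin> D \<and> (v, u) \<notin> D}"
  have "D\<^sup>* \<subseteq> E\<^sup>*" by (rule rtrancl_mono) (auto simp: E_def)
  have D_reversible: "(v, u) \<in> E\<^sup>*" if "(u, v) \<in> D" for u v
    using Cons.prems that \<open>D\<^sup>* \<subseteq> E\<^sup>*\<close> by (blast dest: symD)
  have "?C \<subseteq> E\<^sup>*"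
  proof
    fix e assume "e \<in> ?C"
    then show "e \<in> E\<^sup>*" using D_reversible by (cases e) (auto simp: E_def)
  qed
  then have new_reversible: "(v, u) \<in> E\<^sup>*" if "(u, v) \<in> ?C" for u v
    using that by (blast intro: zero_instance_strongly_connected zero_instance_edge_on_shelf_walk)
  have "sym (E\<^sup>*)"
    using D_reversible new_reversible by (intro sym_rtrancl_if_reversible) (auto simp: E_def)
  then show ?case using Cons.IH by (simp add: E_def)
qed

lemma shelf_walk_through_hseg:
  assumes "2 \<le> nh" and "i < nh" and "j + 1 < nv"
  obtains s
  where "s \<in> shelves nh nv" and "{Cross i j, HSeg i j, Cross i (j+1)} \<subseteq> set (shelf_walk s)"
proof (cases "i + 1 < nh")
  case True
  with assms that[of "(i, j)"] show ?thesis by (simp add: shelves_def shelf_walk_def)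
next
  case False
  with assms have "i = (i - 1) + 1" by simp
  with assms that[of "(i - 1, j)"] show ?thesis by (simp add: shelves_def shelf_walk_def)
qed

lemma shelf_walk_through_vseg:
  assumes "2 \<le> nv" and "i + 1 < nh" and "j < nv"
  obtains s
  where "s \<in> shelves nh nv" and "{Cross i j, VSeg i j, Cross (i+1) j} \<subseteq> set (shelf_walk s)"
proof (cases "j + 1 < nv")
  case True
  with assms that[of "(i, j)"] show ?thesis by (simp add: shelves_def shelf_walk_def)
next
  case False
  with assms have "j = (j - 1) + 1" by simp
  with assms that[of "(i, j - 1)"] show ?thesis by (simp add: shelves_def shelf_walk_def)
qed

lemma tmap_strongly_connected_if_shelves_are:
  assumes "2 \<le> nh" and "2 \<le> nv"
    and shelf: "\<And>s u v. s \<in> shelves nh nv \<Longrightarrow> u \<in> set (shelf_walk s) \<Longrightarrow> v \<in> set (shelf_walk s)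
      \<Longrightarrow> (u, v) \<in> R\<^sup>*"
    and "x \<in> tmap_vertices nh nv" and "y \<in> tmap_vertices nh nv"
  shows "(x, y) \<in> R\<^sup>*"
proof -
  define C where "C = {x. (Cross 0 0, x) \<in> R\<^sup>* \<and> (x, Cross 0 0) \<in> R\<^sup>*}"
  have along_shelf: "v \<in> C"
    if "u \<in> C" "s \<in> shelves nh nv" "u \<in> set (shelf_walk s)" "v \<in> set (shelf_walk s)" for u v s
    using that shelf[of s u v] shelf[of s v u] by (auto simp: C_def intro: rtrancl_trans)
  have row0: "Cross 0 j \<in> C" if "j < nv" for j
    using that
  proof (induction j)
    case 0
    then show ?case by (simp add: C_def)
  next
    case (Suc j)
    obtain s where "s \<in> shelves nh nv" "{Cross 0 j, HSeg 0 j, Cross 0 (j+1)} \<subseteq> set (shelf_walk s)"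
      using shelf_walk_through_hseg[of nh 0 j nv] assms(1) Suc.prems by auto
    with Suc show ?case by (auto intro: along_shelf)
  qed
  have cross: "Cross i j \<in> C" if "i < nh" "j < nv" for i j
    using that
  proof (induction i)
    case 0
    then show ?case using row0 by simp
  next
    case (Suc i)
    obtain s where "s \<in> shelves nh nv" "{Cross i j, VSeg i j, Cross (i+1) j} \<subseteq> set (shelf_walk s)"
      using shelf_walk_through_vseg[of nv i nh j] assms(2) Suc.prems by auto
    with Suc show ?case by (auto intro: along_shelf)
  qed
  have "z \<in> C" if "z \<in> tmap_vertices nh nv" for z
    using that unfolding tmap_vertices_def
  proof (elim UnE CollectE exE conjE)
    fix i j assume z: "z = HSeg i j" and i: "i < nh" and j: "j + 1 < nv"
    obtain s where "s \<in> shelves nh nv" "{Cross i j, HSeg i j, Cross i (j+1)} \<subseteq> set (shelf_walk s)"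
      using shelf_walk_through_hseg[OF assms(1) i j] .
    with z i j show "z \<in> C" using cross[of i j] by (auto intro: along_shelf)
  next
    fix i j assume z: "z = VSeg i j" and i: "i + 1 < nh" and j: "j < nv"
    obtain s where "s \<in> shelves nh nv" "{Cross i j, VSeg i j, Cross (i+1) j} \<subseteq> set (shelf_walk s)"
      using shelf_walk_through_vseg[OF assms(2) i j] .
    with z i j show "z \<in> C" using cross[of i j] by (auto intro: along_shelf)
  qed (use cross in simp)
  then show ?thesis using assms(4,5) by (auto simp: C_def intro: rtrancl_trans)
qed

theorem theorem1:
  fixes nh nv :: nat and ori :: "nat \<times> nat \<Rightarrow> bool" and ord :: "(nat \<times> nat) list"
  assumes "2 \<le> nh" and "2 \<le> nv"
    and "distinct ord" and "set ord = shelves nh nv"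
  shows "\<forall>x \<in> tmap_vertices nh nv. \<forall>y \<in> tmap_vertices nh nv.
           (x, y) \<in> (process ori {} ord)\<^sup>*"
proof (intro ballI)
  let ?P = "process ori {} ord"
  have "sym (?P\<^sup>*)" by (rule process_sym_rtrancl) (simp add: sym_Id)
  then have "set (zero_instance ori s) \<subseteq> ?P\<^sup>*" if "s \<in> shelves nh nv" for s
    using process_covers_zero_instance[of s ord ori "{}"] that assms(4)
    by (auto dest: symD)
  then show "(x, y) \<in> ?P\<^sup>*" if "x \<in> tmap_vertices nh nv" "y \<in> tmap_vertices nh nv" for x y
    using assms(1,2) that
    by (blast intro: tmap_strongly_connected_if_shelves_are zero_instance_strongly_connected)
qed

end
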